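(* Let $1\le p,q\le\infty$, $A=(a_{ij})$ a real $m\times n$ matrix and $G=(g_{ij})$ an $m\times n$ matrix with i.i.d. standard Gaussian entries. Then $$\mathbb{E}\|G_A\colon\ell_p^n\to\ell_q^m\|\ge c(p,q)\cdot\begin{cases}\max_{j\le n}\sqrt{\ln(j+1)}\,b_j^{\downarrow}&\text{if }p\le q\le2,\\ \max_{i\le m}\sqrt{\ln(i+1)}\,d_i^{\downarrow}&\text{if }2\le p\le q,\\ 0&\text{otherwise,}\end{cases}$$ where $b_j=\|(a_{ij})_{i\le m}\|_{2q/(2-q)}$, $d_i=\|(a_{ij})_{j\le n}\|_{2p/(p-2)}$, and $c(p,q)>0$ depends only on $p,q$.
   Context: $G_A=(a_{ij}g_{ij})$. $\|B\colon\ell_p^n\to\ell_q^m\|=\sup_{\|x\|_p\le1}\|Bx\|_q$ with $\|\cdot\|_s$ the usual $\ell_s$ norm. For a sequence $(x_j)$, $(x_j^{\downarrow})$ is the non-increasing rearrangement of $(|x_j|)$. The exponents $2q/(2-q)$ for $q=2$ and $2p/(p-2)$ for $p=2$ are interpreted as $\infty$. *)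

theory Defs
  imports "HOL-Probability.Probability"
begin

definition lp_norm :: "ereal \<Rightarrow> (nat \<Rightarrow> real) \<Rightarrow> nat \<Rightarrow> real" where
  "lp_norm s x k =
     (if s = \<infinity> then (if k = 0 then 0 else Max ((\<lambda>i. \<bar>x i\<bar>) ` {..<k}))
      else (\<Sum>i<k. \<bar>x i\<bar> powr real_of_ereal s) powr (1 / real_of_ereal s))"

definition op_norm :: "ereal \<Rightarrow> ereal \<Rightarrow> nat \<Rightarrow> nat \<Rightarrow> (nat \<times> nat \<Rightarrow> real) \<Rightarrow> real" where
  "op_norm p q m n B =
     Sup {lp_norm q (\<lambda>i. \<Sum>j<n. B (i, j) * x j) m | x. lp_norm p x n \<le> 1}"

text \<open>Non-increasing rearrangement of (|x 0|, ..., |x (k-1)|), indexed from 1 to k.\<close>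
definition dec_rearr :: "(nat \<Rightarrow> real) \<Rightarrow> nat \<Rightarrow> nat \<Rightarrow> real" where
  "dec_rearr x k j = rev (sort (map (\<lambda>i. \<bar>x i\<bar>) [0..<k])) ! (j - 1)"

definition exp_q :: "ereal \<Rightarrow> ereal" where
  "exp_q q = (if q = 2 then \<infinity> else 2 * q / (2 - q))"

definition exp_p :: "ereal \<Rightarrow> ereal" where
  "exp_p p = (if p = 2 then \<infinity> else if p = \<infinity> then 2 else 2 * p / (p - 2))"

definition gauss_matrix :: "nat \<Rightarrow> nat \<Rightarrow> (nat \<times> nat \<Rightarrow> real) measure" where
  "gauss_matrix m n = PiM ({..<m} \<times> {..<n}) (\<lambda>_. density lborel std_normal_density)"

end

theory Submission
  imports Defs
begin

(*
  Fix k and the k columns j with the largest b_j. For each of them pick t in the unit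
  ball of the dual space l_q* with (sum_i (a_ij t_i)^2)^(1/2) = b_j (the equality case of
  Holder's inequality for a_ij^2 and t_i^2); then ||G_A|| >= ||G_A e_j||_q >= |sum_i a_ij g_ij t_i|.
  These k centred Gaussian variables are independent with standard deviations at least
  b_k^down. Each exceeds sqrt (ln (k + 1)) standard deviations with probability at least
  c / (k + 1), so with probability bounded away from zero one of them does, which gives
  E ||G_A|| >= c' sqrt (ln (k + 1)) b_k^down. For rows one picks x in the unit ball of l_p
  with (sum_j (a_ij x_j)^2)^(1/2) = d_i and uses ||G_A|| >= |(G_A x)_i|.
*)

section \<open>Finite l_p norms and the operator norm\<close>

lemma lp_norm_ereal: "lp_norm (ereal s) x k = (\<Sum>i<k. \<bar>x i\<bar> powr s) powr (1 / s)"
  by (simp add: lp_norm_def)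

lemma lp_norm_infinity: "lp_norm \<infinity> x k = (if k = 0 then 0 else Max ((\<lambda>i. \<bar>x i\<bar>) ` {..<k}))"
  by (simp add: lp_norm_def)

lemma lp_norm_one: "lp_norm 1 x k = (\<Sum>i<k. \<bar>x i\<bar>)"
  using lp_norm_ereal[of 1] by (simp add: one_ereal_def)

lemma lp_norm_two_squared: "(lp_norm 2 x k)\<^sup>2 = (\<Sum>i<k. (x i)\<^sup>2)"
proof -
  have "lp_norm 2 x k = (\<Sum>i<k. (x i)\<^sup>2) powr (1 / 2)"
    using lp_norm_ereal[of 2 x k] by (simp add: numeral_eq_ereal powr_numeral)
  then show ?thesis
    by (simp add: sum_nonneg powr_half_sqrt)
qed

lemma lp_norm_nonneg: "0 \<le> lp_norm s x k"
proof (cases "s = \<infinity> \<and> k \<noteq> 0")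
  case True
  then have "\<bar>x 0\<bar> \<le> Max ((\<lambda>i. \<bar>x i\<bar>) ` {..<k})" by (intro Max_ge) auto
  then have "0 \<le> Max ((\<lambda>i. \<bar>x i\<bar>) ` {..<k})" using abs_ge_zero[of "x 0"] by linarith
  then show ?thesis using True by (simp add: lp_norm_infinity)
qed (auto simp: lp_norm_def)

lemma abs_le_lp_norm:
  assumes "1 \<le> s" "i < k"
  shows "\<bar>x i\<bar> \<le> lp_norm s x k"
proof (cases s)
  case (real r)
  with assms have "1 \<le> r" by simp
  then have "\<bar>x i\<bar> = (\<bar>x i\<bar> powr r) powr (1 / r)" by (simp add: powr_powr)
  also have "\<dots> \<le> (\<Sum>i<k. \<bar>x i\<bar> powr r) powr (1 / r)"
    using \<open>1 \<le> r\<close> assms(2) by (intro powr_mono2 member_le_sum) auto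
  finally show ?thesis by (simp add: real lp_norm_ereal)
qed (use assms in \<open>auto simp: lp_norm_infinity\<close>)

lemma lp_norm_le_card_mult:
  assumes "1 \<le> s" "0 \<le> M" "\<And>i. i < k \<Longrightarrow> \<bar>x i\<bar> \<le> M"
  shows "lp_norm s x k \<le> real k * M"
proof (cases s)
  case (real r)
  with assms have "1 \<le> r" by simp
  have "(\<Sum>i<k. \<bar>x i\<bar> powr r) \<le> (\<Sum>i<k. M powr r)"
    using assms \<open>1 \<le> r\<close> by (intro sum_mono powr_mono2) auto
  then have "(\<Sum>i<k. \<bar>x i\<bar> powr r) powr (1 / r) \<le> (real k * M powr r) powr (1 / r)"
    using \<open>1 \<le> r\<close> by (intro powr_mono2) (auto intro: sum_nonneg)
  also have "\<dots> = real k powr (1 / r) * M"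
    using \<open>1 \<le> r\<close> assms(2) by (simp add: powr_mult powr_powr)
  also have "\<dots> \<le> real k * M"
  proof (cases "k = 0")
    case False
    then have "real k powr (1 / r) \<le> real k powr 1"
      using \<open>1 \<le> r\<close> by (intro powr_mono) auto
    then show ?thesis using assms(2) False by (intro mult_right_mono) auto
  qed simp
  finally show ?thesis by (simp add: real lp_norm_ereal)
next
  case PInf
  have "Max ((\<lambda>i. \<bar>x i\<bar>) ` {..<k}) \<le> real k * M" if "k \<noteq> 0"
  proof -
    have "Max ((\<lambda>i. \<bar>x i\<bar>) ` {..<k}) \<le> M"
      using that assms(3) by (subst Max_le_iff) auto
    also have "M \<le> real k * M"
      using that assms(2) mult_right_mono[of 1 "real k" M] by simp
    finally show ?thesis .
  qed
  then show ?thesis using PInf by (simp add: lp_norm_infinity)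
qed (use assms in simp)

lemma lp_norm_unit_vector:
  assumes "1 \<le> s" "j < k"
  shows "lp_norm s (\<lambda>i. if i = j then 1 else 0) k = 1"
proof (cases s)
  case (real r)
  have "(\<Sum>i<k. \<bar>if i = j then 1 else 0\<bar> powr r) = (\<Sum>i<k. if i = j then 1 else 0)"
    by (intro sum.cong) auto
  then show ?thesis using assms(2) by (simp add: real lp_norm_ereal)
next
  case PInf
  have "Max ((\<lambda>i. \<bar>if i = j then 1 else 0\<bar>) ` {..<k}) = (1::real)"
    using assms by (intro Max_eqI) force+
  then show ?thesis using PInf assms by (simp add: lp_norm_infinity)
qed (use assms in simp)

lemma lp_norm_mult_le_op_norm:
  assumes "1 \<le> p" "1 \<le> q" "lp_norm p x n \<le> 1"
  shows "lp_norm q (\<lambda>i. \<Sum>j<n. B (i, j) * x j) m \<le> op_norm p q m n B"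
  unfolding op_norm_def
proof (rule cSup_upper)
  show "lp_norm q (\<lambda>i. \<Sum>j<n. B (i, j) * x j) m
          \<in> {lp_norm q (\<lambda>i. \<Sum>j<n. B (i, j) * x j) m | x. lp_norm p x n \<le> 1}"
    using assms by auto
  define C where "C = (\<Sum>i<m. \<Sum>j<n. \<bar>B (i, j)\<bar>)"
  have row_bound: "\<bar>\<Sum>j<n. B (i, j) * y j\<bar> \<le> C" if "lp_norm p y n \<le> 1" "i < m" for y i
  proof -
    have y_bound: "\<bar>y j\<bar> \<le> 1" if "j < n" for j
      using abs_le_lp_norm[OF assms(1) that, of y] \<open>lp_norm p y n \<le> 1\<close> by simp
    have "\<bar>\<Sum>j<n. B (i, j) * y j\<bar> \<le> (\<Sum>j<n. \<bar>B (i, j)\<bar> * \<bar>y j\<bar>)"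
      using sum_abs[of "\<lambda>j. B (i, j) * y j" "{..<n}"] by (simp add: abs_mult)
    also have "\<dots> \<le> (\<Sum>j<n. \<bar>B (i, j)\<bar>)"
      using y_bound by (intro sum_mono mult_left_le) auto
    also have "\<dots> \<le> C"
      unfolding C_def using that(2) by (intro member_le_sum[where f = "\<lambda>i. \<Sum>j<n. \<bar>B (i, j)\<bar>"]) auto
    finally show ?thesis .
  qed
  have "0 \<le> C" unfolding C_def by (intro sum_nonneg) auto
  show "bdd_above {lp_norm q (\<lambda>i. \<Sum>j<n. B (i, j) * x j) m | x. lp_norm p x n \<le> 1}"
  proof (rule bdd_aboveI)
    fix z assume "z \<in> {lp_norm q (\<lambda>i. \<Sum>j<n. B (i, j) * x j) m | x. lp_norm p x n \<le> 1}"
    then obtain y where "lp_norm p y n \<le> 1" "z = lp_norm q (\<lambda>i. \<Sum>j<n. B (i, j) * y j) m"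
      by blast
    then show "z \<le> real m * C"
      using lp_norm_le_card_mult[OF assms(2) \<open>0 \<le> C\<close> row_bound] by simp
  qed
qed

lemma lp_norm_column_le_op_norm:
  assumes "1 \<le> p" "1 \<le> q" "j < n"
  shows "lp_norm q (\<lambda>i. B (i, j)) m \<le> op_norm p q m n B"
proof -
  have "(\<Sum>j'<n. B (i, j') * (if j' = j then 1 else 0)) = B (i, j)" for i
    using assms(3) by (simp add: if_distrib cong: if_cong)
  then show ?thesis
    using lp_norm_mult_le_op_norm[OF assms(1,2) lp_norm_unit_vector[OF assms(1,3), THEN eq_refl],
        where B = B and m = m]
    by simp
qed

section \<open>Holder's inequality and its equality case\<close>

definition conj_exp :: "ereal \<Rightarrow> ereal" where
  "conj_exp q = (if q = 1 then \<infinity> else if q = \<infinity> then 1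
                 else ereal (real_of_ereal q / (real_of_ereal q - 1)))"

lemma lp_norm_ereal_power: "0 < s \<Longrightarrow> lp_norm (ereal s) x k powr s = (\<Sum>i<k. \<bar>x i\<bar> powr s)"
  by (simp add: lp_norm_ereal powr_powr sum_nonneg)

lemma lp_norm_eq_0D:
  assumes "1 \<le> s" "lp_norm s x k = 0" "i < k"
  shows "x i = 0"
  using abs_le_lp_norm[OF assms(1,3), of x] assms(2) by simp

lemma abs_sum_mult_le_lp_norm_one_infinity:
  "\<bar>\<Sum>i<k. y i * t i\<bar> \<le> lp_norm 1 y k * lp_norm \<infinity> t k"
proof -
  have "\<bar>\<Sum>i<k. y i * t i\<bar> \<le> (\<Sum>i<k. \<bar>y i\<bar> * \<bar>t i\<bar>)"
    using sum_abs[of "\<lambda>i. y i * t i" "{..<k}"] by (simp add: abs_mult)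
  also have "\<dots> \<le> (\<Sum>i<k. \<bar>y i\<bar> * lp_norm \<infinity> t k)"
    by (intro sum_mono mult_left_mono abs_le_lp_norm) auto
  also have "\<dots> = lp_norm 1 y k * lp_norm \<infinity> t k"
    by (simp add: lp_norm_one sum_distrib_right)
  finally show ?thesis .
qed

lemma abs_sum_mult_le_lp_norm_Holder:
  fixes q :: real
  assumes "1 < q"
  shows "\<bar>\<Sum>i<k. y i * t i\<bar> \<le> lp_norm (ereal q) y k * lp_norm (ereal (q / (q - 1))) t k"
proof -
  define q' where "q' = q / (q - 1)"
  have "1 < q'" "1 / q + 1 / q' = 1" using assms by (auto simp: q'_def field_simps)
  define N M where "N = lp_norm (ereal q) y k" and "M = lp_norm (ereal q') t k"
  have "\<bar>\<Sum>i<k. y i * t i\<bar> \<le> (\<Sum>i<k. \<bar>y i\<bar> * \<bar>t i\<bar>)"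
    using sum_abs[of "\<lambda>i. y i * t i" "{..<k}"] by (simp add: abs_mult)
  also have "\<dots> \<le> N * M"
  proof (cases "N = 0 \<or> M = 0")
    case True
    have "y i = 0 \<or> t i = 0" if "i < k" for i
      using True lp_norm_eq_0D[OF _ _ that, of "ereal q" y] lp_norm_eq_0D[OF _ _ that, of "ereal q'" t]
        assms \<open>1 < q'\<close> unfolding N_def M_def by force
    then have "(\<Sum>i<k. \<bar>y i\<bar> * \<bar>t i\<bar>) = 0" by (intro sum.neutral) auto
    then show ?thesis using True by auto
  next
    case False
    then have "0 < N" "0 < M"
      using lp_norm_nonneg[of "ereal q" y k] lp_norm_nonneg[of "ereal q'" t k] unfolding N_def M_def by linarith+
    have "(\<Sum>i<k. \<bar>y i\<bar> * \<bar>t i\<bar>) / (N * M) = (\<Sum>i<k. (\<bar>y i\<bar> / N) * (\<bar>t i\<bar> / M))"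
      by (simp add: sum_divide_distrib)
    also have "\<dots> \<le> (\<Sum>i<k. (\<bar>y i\<bar> / N) powr q / q + (\<bar>t i\<bar> / M) powr q' / q')"
      using \<open>0 < N\<close> \<open>0 < M\<close> \<open>1 < q'\<close> \<open>1 / q + 1 / q' = 1\<close> assms
      by (intro sum_mono Youngs_inequality) auto
    also have "\<dots> = (\<Sum>i<k. \<bar>y i\<bar> powr q) / N powr q / q + (\<Sum>i<k. \<bar>t i\<bar> powr q') / M powr q' / q'"
      using \<open>0 < N\<close> \<open>0 < M\<close> by (simp add: sum.distrib powr_divide sum_divide_distrib)
    also have "\<dots> = 1 / q + 1 / q'"
    proof -
      have "(\<Sum>i<k. \<bar>y i\<bar> powr q) = N powr q" "(\<Sum>i<k. \<bar>t i\<bar> powr q') = M powr q'"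
        using assms \<open>1 < q'\<close> by (simp_all add: N_def M_def lp_norm_ereal_power)
      then show ?thesis using \<open>0 < N\<close> \<open>0 < M\<close> by simp
    qed
    finally show ?thesis
      using \<open>0 < N\<close> \<open>0 < M\<close> \<open>1 / q + 1 / q' = 1\<close> by (simp add: divide_le_eq)
  qed
  finally show ?thesis by (simp add: N_def M_def q'_def)
qed

lemma abs_sum_mult_le_lp_norm_mult_conj_exp:
  assumes "1 \<le> q"
  shows "\<bar>\<Sum>i<k. y i * t i\<bar> \<le> lp_norm q y k * lp_norm (conj_exp q) t k"
proof (cases q)
  case (real r)
  show ?thesis
  proof (cases "r = 1")
    case True
    then show ?thesis
      using real abs_sum_mult_le_lp_norm_one_infinity by (simp add: conj_exp_def one_ereal_def)
  next
    case False
    then show ?thesis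
      using real assms abs_sum_mult_le_lp_norm_Holder[of r] by (simp add: conj_exp_def)
  qed
next
  case PInf
  then show ?thesis
    using abs_sum_mult_le_lp_norm_one_infinity[of t y k]
    by (simp add: conj_exp_def mult.commute)
qed (use assms in simp)

lemma exp_q_ereal: "q \<noteq> 2 \<Longrightarrow> exp_q (ereal q) = ereal (2 * q / (2 - q))"
  by (simp add: exp_q_def)

lemma exp_p_ereal: "p \<noteq> 2 \<Longrightarrow> exp_p (ereal p) = ereal (2 * p / (p - 2))"
  by (simp add: exp_p_def)

lemma conj_exp_ge_two:
  assumes "1 \<le> q" "q \<le> 2"
  shows "2 \<le> conj_exp q"
proof -
  obtain r where r: "q = ereal r" "1 \<le> r" "r \<le> 2" using assms by (cases q) auto
  show ?thesis
  proof (cases "r = 1")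
    case False
    then have "2 * (r - 1) \<le> r" "0 < r - 1" using r by auto
    then show ?thesis using r False by (simp add: conj_exp_def le_divide_eq)
  qed (simp add: r conj_exp_def one_ereal_def)
qed

lemma exp_q_eq_exp_p_conj_exp:
  assumes "1 \<le> q" "q \<le> 2"
  shows "exp_q q = exp_p (conj_exp q)"
proof -
  obtain r where r: "q = ereal r" "1 \<le> r" "r \<le> 2" using assms by (cases q) auto
  consider "r = 1" | "r = 2" | "1 < r" "r < 2" using r by linarith
  then show ?thesis
  proof cases
    case 1
    then show ?thesis by (simp add: r conj_exp_def exp_p_def exp_q_ereal one_ereal_def)
  next
    case 2
    then show ?thesis by (simp add: r conj_exp_def exp_p_def exp_q_def numeral_eq_ereal)
  next
    case 3
    then have "r / (r - 1) - 2 = (2 - r) / (r - 1)"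
      by (simp add: field_simps)
    then have "r / (r - 1) \<noteq> 2" "2 * (r / (r - 1)) / (r / (r - 1) - 2) = 2 * r / (2 - r)"
      using 3 by auto
    then show ?thesis using 3 by (simp add: r conj_exp_def exp_p_ereal exp_q_ereal)
  qed
qed

lemma lp_norm_exp_p_attained_real:
  fixes s :: real
  assumes "2 < s"
  obtains t where "lp_norm (ereal s) t k \<le> 1"
    "(\<Sum>i<k. (a i * t i)\<^sup>2) = (lp_norm (ereal (2 * s / (s - 2))) a k)\<^sup>2"
proof -
  define r where "r = 2 * s / (s - 2)"
  have r: "0 < r" "2 + 2 * (r / s) = r" "2 / r = 1 - 2 / s"
    using assms by (auto simp: r_def field_simps)
  define S where "S = (\<Sum>i<k. \<bar>a i\<bar> powr r)"
  show ?thesis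
  proof (cases "S = 0")
    case True
    then have "\<forall>i<k. a i = 0"
      unfolding S_def by (subst (asm) sum_nonneg_eq_0_iff) auto
    then show ?thesis
      using that[of "\<lambda>_. 0"] assms r by (simp add: lp_norm_ereal r_def)
  next
    case False
    moreover have "0 \<le> S" unfolding S_def by (intro sum_nonneg) auto
    ultimately have "0 < S" by simp
    \<comment> \<open>the equality case of Holder's inequality for \<open>a\<^sup>2\<close> and \<open>t\<^sup>2\<close> with exponents \<open>r/2\<close> and \<open>s/2\<close>\<close>
    define t where "t i = \<bar>a i\<bar> powr (r / s) / S powr (1 / s)" for i
    have "(\<Sum>i<k. \<bar>t i\<bar> powr s) = (\<Sum>i<k. \<bar>a i\<bar> powr r / S)"
      using \<open>0 < S\<close> assms by (intro sum.cong) (simp_all add: t_def powr_divide powr_powr)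
    also have "\<dots> = 1" using \<open>0 < S\<close> by (simp add: S_def[symmetric] sum_divide_distrib[symmetric])
    finally have "lp_norm (ereal s) t k \<le> 1" by (simp add: lp_norm_ereal)
    have powr_square: "(x powr e)\<^sup>2 = x powr (2 * e)" for x e :: real
      by (simp add: power2_eq_square flip: powr_add)
    have "(a i * t i)\<^sup>2 = \<bar>a i\<bar> powr r / S powr (2 / s)" for i
    proof (cases "a i = 0")
      case False
      have "(a i * t i)\<^sup>2 = (a i)\<^sup>2 * \<bar>a i\<bar> powr (2 * (r / s)) / S powr (2 / s)"
        by (simp add: t_def power_mult_distrib power_divide powr_square)
      also have "(a i)\<^sup>2 * \<bar>a i\<bar> powr (2 * (r / s)) = \<bar>a i\<bar> powr (2 + 2 * (r / s))"
        using False by (simp add: powr_add powr_numeral)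
      finally show ?thesis using r(2) by simp
    qed (use r in \<open>simp add: t_def\<close>)
    then have "(\<Sum>i<k. (a i * t i)\<^sup>2) = S / S powr (2 / s)"
      by (simp add: S_def sum_divide_distrib)
    also have "\<dots> = S powr (1 - 2 / s)"
      using \<open>0 < S\<close> by (simp add: powr_diff)
    also have "\<dots> = (S powr (1 / r))\<^sup>2"
      using r by (simp add: powr_square)
    finally show ?thesis
      using that \<open>lp_norm (ereal s) t k \<le> 1\<close> by (simp add: lp_norm_ereal S_def r_def)
  qed
qed

lemma lp_norm_exp_p_attained:
  assumes "2 \<le> s" "1 \<le> k"
  obtains t where "lp_norm s t k \<le> 1" "(\<Sum>i<k. (a i * t i)\<^sup>2) = (lp_norm (exp_p s) a k)\<^sup>2"
proof (cases "s = 2")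
  case True
  have "Max ((\<lambda>i. \<bar>a i\<bar>) ` {..<k}) \<in> (\<lambda>i. \<bar>a i\<bar>) ` {..<k}"
    using assms by (intro Max_in) (auto simp: lessThan_empty_iff)
  then obtain i0 where "i0 < k" "lp_norm \<infinity> a k = \<bar>a i0\<bar>"
    using assms by (auto simp: lp_norm_infinity)
  moreover have "(\<Sum>i<k. (a i * (if i = i0 then 1 else 0))\<^sup>2) = (\<Sum>i<k. if i = i0 then (a i0)\<^sup>2 else 0)"
    by (intro sum.cong) auto
  then have "(\<Sum>i<k. (a i * (if i = i0 then 1 else 0))\<^sup>2) = (a i0)\<^sup>2"
    using \<open>i0 < k\<close> by simp
  ultimately show ?thesis
    using that[of "\<lambda>i. if i = i0 then 1 else 0"] lp_norm_unit_vector[of s i0 k] True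
    by (simp add: exp_p_def)
next
  case False
  show ?thesis
  proof (cases s)
    case (real r)
    then have "2 < r" using assms False by auto
    then obtain t where "lp_norm (ereal r) t k \<le> 1"
        "(\<Sum>i<k. (a i * t i)\<^sup>2) = (lp_norm (ereal (2 * r / (r - 2))) a k)\<^sup>2"
      using lp_norm_exp_p_attained_real by blast
    then show ?thesis
      using that real \<open>2 < r\<close> by (simp add: exp_p_ereal)
  next
    case PInf
    have "lp_norm \<infinity> (\<lambda>_. 1) k = 1"
      using assms by (simp add: lp_norm_infinity image_constant_conv lessThan_empty_iff)
    then show ?thesis
      using that[of "\<lambda>_. 1"] PInf lp_norm_two_squared[of a k] by (simp add: exp_p_def)
  qed (use assms in simp)
qed

section \<open>Standard Gaussian vectors\<close>

abbreviation std_gaussian_PiM :: "'i set \<Rightarrow> ('i \<Rightarrow> real) measure" where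
  "std_gaussian_PiM I \<equiv> PiM I (\<lambda>_. std_normal_distribution)"

lemma prob_space_std_gaussian_PiM: "prob_space (std_gaussian_PiM I)"
  by (intro prob_space_PiM prob_space_normal_density) auto

lemma distr_std_gaussian_PiM_component:
  assumes "i \<in> I"
  shows "distr (std_gaussian_PiM I) lborel (\<lambda>\<omega>. \<omega> i) = std_normal_distribution"
proof -
  have "distr (std_gaussian_PiM I) lborel (\<lambda>\<omega>. \<omega> i)
      = distr (std_gaussian_PiM I) std_normal_distribution (\<lambda>\<omega>. \<omega> i)"
    by (rule distr_cong) auto
  also have "\<dots> = std_normal_distribution"
    by (rule distr_PiM_component[OF _ assms]) (auto intro: prob_space_normal_density)
  finally show ?thesis .
qed

lemma indep_vars_std_gaussian_PiM_components:
  assumes "I \<noteq> {}"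
  shows "prob_space.indep_vars (std_gaussian_PiM I) (\<lambda>_. borel) (\<lambda>i \<omega>. \<omega> i) I"
proof -
  interpret prob_space "std_gaussian_PiM I" by (rule prob_space_std_gaussian_PiM)
  have "distr (std_gaussian_PiM I) (PiM I (\<lambda>_. borel)) (\<lambda>\<omega>. restrict \<omega> I)
      = distr (std_gaussian_PiM I) (std_gaussian_PiM I) (\<lambda>\<omega>. \<omega>)"
    by (rule distr_cong) (auto simp: space_PiM intro!: sets_PiM_cong)
  also have "\<dots> = PiM I (\<lambda>i. distr (std_gaussian_PiM I) borel (\<lambda>\<omega>. \<omega> i))"
  proof (simp, rule PiM_cong)
    fix i assume "i \<in> I"
    have "distr (std_gaussian_PiM I) borel (\<lambda>\<omega>. \<omega> i) = distr (std_gaussian_PiM I) lborel (\<lambda>\<omega>. \<omega> i)"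
      by (rule distr_cong) auto
    then show "std_normal_distribution = distr (std_gaussian_PiM I) borel (\<lambda>\<omega>. \<omega> i)"
      by (simp add: distr_std_gaussian_PiM_component[OF \<open>i \<in> I\<close>])
  qed simp
  finally show ?thesis
    by (subst indep_vars_iff_distr_eq_PiM'[OF assms]) auto
qed

lemma distributed_std_gaussian_PiM_linear_comb:
  assumes "finite K" "K \<subseteq> I" "0 < (\<Sum>i\<in>K. (w i)\<^sup>2)"
  shows "distributed (std_gaussian_PiM I) lborel (\<lambda>\<omega>. \<Sum>i\<in>K. w i * \<omega> i)
           (normal_density 0 (sqrt (\<Sum>i\<in>K. (w i)\<^sup>2)))"
proof -
  interpret prob_space "std_gaussian_PiM I" by (rule prob_space_std_gaussian_PiM)
  \<comment> \<open>zero weights are dropped: sum_indep_normal needs summands of positive variance\<close>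
  define S where "S = {i\<in>K. w i \<noteq> 0}"
  have S: "finite S" "S \<subseteq> I" using assms by (auto simp: S_def)
  have "S \<noteq> {}"
    using assms(3) by (auto simp: S_def intro: ccontr)
  then have "I \<noteq> {}" using S by auto
  have indep: "indep_vars (\<lambda>_. borel) (\<lambda>i \<omega>. w i * \<omega> i) S"
    using indep_vars_compose2[OF indep_vars_subset[OF indep_vars_std_gaussian_PiM_components[OF \<open>I \<noteq> {}\<close>] \<open>S \<subseteq> I\<close>],
        where Y="\<lambda>i x. w i * x" and N="\<lambda>_. borel"]
    by simp
  have normal: "distributed (std_gaussian_PiM I) lborel (\<lambda>\<omega>. w i * \<omega> i) (normal_density 0 \<bar>w i\<bar>)"
    if "i \<in> S" for i
  proof -
    have "w i \<noteq> 0" "i \<in> I" using that S by (auto simp: S_def)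
    moreover have "distributed (std_gaussian_PiM I) lborel (\<lambda>\<omega>. \<omega> i) (normal_density 0 1)"
      using \<open>i \<in> I\<close> by (simp add: distributed_def distr_std_gaussian_PiM_component)
    ultimately show ?thesis
      using normal_density_affine[of "\<lambda>\<omega>. \<omega> i" 0 1 "w i" 0] by simp
  qed
  have "distributed (std_gaussian_PiM I) lborel (\<lambda>\<omega>. \<Sum>i\<in>S. w i * \<omega> i)
         (normal_density (\<Sum>i\<in>S. 0) (sqrt (\<Sum>i\<in>S. \<bar>w i\<bar>\<^sup>2)))"
    by (rule sum_indep_normal[OF S(1) \<open>S \<noteq> {}\<close> indep _ normal]) (auto simp: S_def)
  moreover have "(\<lambda>\<omega>. \<Sum>i\<in>S. w i * \<omega> i) = (\<lambda>\<omega>. \<Sum>i\<in>K. w i * \<omega> i)"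
    by (intro ext sum.mono_neutral_left) (auto simp: S_def assms)
  moreover have "(\<Sum>i\<in>S. \<bar>w i\<bar>\<^sup>2) = (\<Sum>i\<in>K. (w i)\<^sup>2)"
    by (simp, intro sum.mono_neutral_left) (auto simp: S_def assms)
  ultimately show ?thesis by simp
qed

lemma indep_vars_std_gaussian_PiM_block_sums:
  assumes "I \<noteq> {}" "\<And>l. l \<in> L \<Longrightarrow> K l \<subseteq> I" "disjoint_family_on K L"
  shows "prob_space.indep_vars (std_gaussian_PiM I) (\<lambda>_. borel) (\<lambda>l \<omega>. \<Sum>i\<in>K l. w i * \<omega> i) L"
proof -
  interpret prob_space "std_gaussian_PiM I" by (rule prob_space_std_gaussian_PiM)
  have "indep_vars (\<lambda>l. PiM (K l) (\<lambda>_. borel)) (\<lambda>l \<omega>. restrict (\<lambda>i. \<omega> i) (K l)) L"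
    by (rule indep_vars_restrict[OF indep_vars_std_gaussian_PiM_components[OF assms(1)] assms(2,3)])
  then have "indep_vars (\<lambda>_. borel) (\<lambda>l \<omega>. (\<lambda>h. \<Sum>i\<in>K l. w i * h i) (restrict (\<lambda>i. \<omega> i) (K l))) L"
    by (rule indep_vars_compose2) measurable
  then show ?thesis
    by (rule indep_vars_cong[THEN iffD1, rotated 3]) auto
qed

section \<open>Maxima of independent Gaussians\<close>

(* The tail is at least the length \<sigma> of the interval (s \<sigma>, (s + 1) \<sigma>] times the
   density at its right end point. *)
lemma (in prob_space) normal_tail_ge:
  assumes X: "distributed M lborel X (normal_density 0 \<sigma>)" and "0 < \<sigma>" "0 \<le> s"
  shows "exp (-1) / sqrt (2 * pi) * exp (- s\<^sup>2) \<le> prob {\<omega>\<in>space M. s * \<sigma> < X \<omega>}"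
proof -
  let ?f = "normal_density 0 \<sigma>"
  let ?a = "s * \<sigma> + \<sigma>"
  have set: "{\<omega>\<in>space M. s * \<sigma> < X \<omega>} = X -` {s * \<sigma><..} \<inter> space M" by auto
  have density_at_a: "?f ?a * \<sigma> = exp (- (s + 1)\<^sup>2 / 2) / sqrt (2 * pi)"
    using \<open>0 < \<sigma>\<close> unfolding normal_density_def
    by (simp add: real_sqrt_mult power2_eq_square field_simps)
  have "exp (-1) / sqrt (2 * pi) * exp (- s\<^sup>2) \<le> exp (- (s + 1)\<^sup>2 / 2) / sqrt (2 * pi)"
  proof -
    have "-1 + - s\<^sup>2 \<le> - (s + 1)\<^sup>2 / 2"
      using zero_le_power2[of "s - 1"] by (simp add: power2_eq_square field_simps)
    then show ?thesis
      by (simp add: divide_right_mono mult.commute flip: exp_add)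
  qed
  also have "\<dots> = ?f ?a * \<sigma>"
    by (rule density_at_a[symmetric])
  finally have "ennreal (exp (-1) / sqrt (2 * pi) * exp (- s\<^sup>2)) \<le> ennreal (?f ?a * \<sigma>)"
    by (rule ennreal_leI)
  also have "\<dots> = (\<integral>\<^sup>+x. ennreal (?f ?a) * indicator {s * \<sigma><..?a} x \<partial>lborel)"
    using \<open>0 < \<sigma>\<close> by (subst nn_integral_cmult_indicator) (auto simp: ennreal_mult)
  also have "\<dots> \<le> (\<integral>\<^sup>+x. ennreal (?f x) * indicator {s * \<sigma><..} x \<partial>lborel)"
  proof (intro nn_integral_mono)
    fix x
    show "ennreal (?f ?a) * indicator {s * \<sigma><..?a} x \<le> ennreal (?f x) * indicator {s * \<sigma><..} x"
    proof (cases "x \<in> {s * \<sigma><..?a}")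
      case True
      then have x: "s * \<sigma> < x" "x \<le> ?a" by auto
      have "0 \<le> s * \<sigma>" using assms by simp
      then have "x\<^sup>2 \<le> ?a\<^sup>2" using x by (intro power_mono) auto
      then have "?f ?a \<le> ?f x"
        unfolding normal_density_def using \<open>0 < \<sigma>\<close>
        by (intro mult_left_mono) (auto simp: divide_right_mono)
      then show ?thesis using True x by (auto intro: ennreal_leI)
    qed auto
  qed
  also have "\<dots> = emeasure (density lborel ?f) {s * \<sigma><..}"
    by (subst emeasure_density) auto
  also have "\<dots> = emeasure (distr M lborel X) {s * \<sigma><..}"
    using X by (simp add: distributed_def)
  also have "\<dots> = emeasure M {\<omega>\<in>space M. s * \<sigma> < X \<omega>}"
    unfolding set using X by (intro emeasure_distr) (auto simp: distributed_def)
  finally show ?thesis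
    by (simp add: emeasure_eq_measure)
qed

(* exp (-1) / sqrt (2 * pi) is the constant of normal_tail_ge, and with it the probability
   that none of k independent centred normals exceeds sqrt (ln (k + 1)) standard deviations
   is at most (1 - c / (k + 1)) ^ k <= exp (- c / 2). *)
definition gaussian_max_const :: real where
  "gaussian_max_const = 1 - exp (- (exp (-1) / sqrt (2 * pi)) / 2)"

lemma gaussian_max_const_pos: "0 < gaussian_max_const"
  unfolding gaussian_max_const_def by simp

lemma (in prob_space) prob_indep_normal_all_le:
  assumes L: "finite L" "card L = k" "1 \<le> k"
    and indep: "indep_vars (\<lambda>_. borel) X L"
    and normal: "\<And>l. l \<in> L \<Longrightarrow> distributed M lborel (X l) (normal_density 0 (\<sigma> l))"
    and \<sigma>: "\<And>l. l \<in> L \<Longrightarrow> 0 < \<sigma> l"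
  shows "prob {\<omega>\<in>space M. \<forall>l\<in>L. X l \<omega> \<le> sqrt (ln (real k + 1)) * \<sigma> l} \<le> 1 - gaussian_max_const"
proof -
  define s where "s = sqrt (ln (real k + 1))"
  define c0 where "c0 = exp (-1) / sqrt (2 * pi)"
  have "0 \<le> s" using L by (simp add: s_def)
  have exp_s: "exp (- s\<^sup>2) = 1 / (real k + 1)"
    using L by (simp add: s_def exp_minus inverse_eq_divide)
  have "0 < c0" by (simp add: c0_def)
  have "c0 < 1"
  proof -
    have "exp (-1::real) < 1" "1 < sqrt (2 * pi)" using pi_gt3 by simp_all
    then have "exp (-1) < sqrt (2 * pi)" by linarith
    then show ?thesis unfolding c0_def by (simp add: divide_less_eq)
  qed
  have "L \<noteq> {}" using L by auto
  have "{\<omega>\<in>space M. \<forall>l\<in>L. X l \<omega> \<le> s * \<sigma> l} = (\<Inter>l\<in>L. X l -` {..s * \<sigma> l} \<inter> space M)"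
    using \<open>L \<noteq> {}\<close> by auto
  also have "prob \<dots> = (\<Prod>l\<in>L. prob (X l -` {..s * \<sigma> l} \<inter> space M))"
    by (rule indep_varsD_finite[OF indep \<open>L \<noteq> {}\<close> L(1)]) simp
  also have "\<dots> \<le> (\<Prod>l\<in>L. 1 - c0 / (real k + 1))"
  proof (rule prod_mono)
    fix l assume "l \<in> L"
    have "X l \<in> borel_measurable M" using normal[OF \<open>l \<in> L\<close>] by (simp add: distributed_def)
    moreover have "X l -` {..s * \<sigma> l} \<inter> space M = space M - {\<omega>\<in>space M. s * \<sigma> l < X l \<omega>}"
      by auto
    ultimately have "prob (X l -` {..s * \<sigma> l} \<inter> space M) = 1 - prob {\<omega>\<in>space M. s * \<sigma> l < X l \<omega>}"
      by (simp add: prob_compl)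
    moreover have "c0 * exp (- s\<^sup>2) \<le> prob {\<omega>\<in>space M. s * \<sigma> l < X l \<omega>}"
      unfolding c0_def using normal_tail_ge[OF normal \<sigma>] \<open>l \<in> L\<close> \<open>0 \<le> s\<close> by blast
    ultimately show "0 \<le> prob (X l -` {..s * \<sigma> l} \<inter> space M) \<and>
        prob (X l -` {..s * \<sigma> l} \<inter> space M) \<le> 1 - c0 / (real k + 1)"
      by (simp add: exp_s)
  qed
  also have "\<dots> = (1 - c0 / (real k + 1)) ^ k" using L by simp
  also have "\<dots> \<le> exp (- (c0 / (real k + 1))) ^ k"
  proof (rule power_mono)
    show "1 - c0 / (real k + 1) \<le> exp (- (c0 / (real k + 1)))"
      using exp_ge_add_one_self[of "- (c0 / (real k + 1))"] by simp
    have "c0 / (real k + 1) \<le> c0" using \<open>0 < c0\<close> by (simp add: divide_le_eq)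
    then show "0 \<le> 1 - c0 / (real k + 1)" using \<open>c0 < 1\<close> by simp
  qed
  also have "\<dots> = exp (- (real k * (c0 / (real k + 1))))"
    by (simp add: exp_of_nat_mult[symmetric])
  also have "\<dots> \<le> exp (- c0 / 2)"
    using L \<open>0 < c0\<close> by (simp add: field_simps)
  also have "\<dots> = 1 - gaussian_max_const"
    by (simp add: gaussian_max_const_def c0_def)
  finally show ?thesis by (simp add: s_def)
qed

lemma (in prob_space) nn_integral_ge_max_indep_normal:
  assumes L: "finite L" "card L = k" "1 \<le> k"
    and indep: "indep_vars (\<lambda>_. borel) X L"
    and normal: "\<And>l. l \<in> L \<Longrightarrow> distributed M lborel (X l) (normal_density 0 (\<sigma> l))"
    and \<beta>: "0 < \<beta>" "\<And>l. l \<in> L \<Longrightarrow> \<beta> \<le> \<sigma> l"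
    and F: "\<And>\<omega> l. \<omega> \<in> space M \<Longrightarrow> l \<in> L \<Longrightarrow> X l \<omega> \<le> F \<omega>"
  shows "ennreal (gaussian_max_const * sqrt (ln (real k + 1)) * \<beta>) \<le> (\<integral>\<^sup>+\<omega>. ennreal (F \<omega>) \<partial>M)"
proof -
  define s where "s = sqrt (ln (real k + 1))"
  have "0 \<le> s" using L by (simp add: s_def)
  define A where "A = {\<omega>\<in>space M. \<forall>l\<in>L. X l \<omega> \<le> s * \<sigma> l}"
  have "A = (\<Inter>l\<in>L. X l -` {..s * \<sigma> l} \<inter> space M)"
    using L by (auto simp: A_def)
  moreover have "X l \<in> borel_measurable M" if "l \<in> L" for l
    using normal[OF that] by (simp add: distributed_def)
  ultimately have "A \<in> events"
    using L by auto
  have "gaussian_max_const \<le> prob (space M - A)"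
    using prob_indep_normal_all_le[OF L indep normal] \<beta> \<open>A \<in> events\<close>
    by (fastforce simp: A_def s_def prob_compl intro: less_le_trans)
  then have "s * \<beta> * gaussian_max_const \<le> s * \<beta> * prob (space M - A)"
    using \<open>0 \<le> s\<close> \<beta>(1) by (intro mult_left_mono) auto
  then have "ennreal (gaussian_max_const * s * \<beta>) \<le> ennreal (s * \<beta>) * emeasure M (space M - A)"
    using \<open>0 \<le> s\<close> \<beta>(1)
    by (simp add: emeasure_eq_measure ennreal_mult[symmetric] ennreal_leI mult_ac)
  also have "\<dots> = (\<integral>\<^sup>+\<omega>. ennreal (s * \<beta>) * indicator (space M - A) \<omega> \<partial>M)"
    using \<open>A \<in> events\<close> by (simp add: nn_integral_cmult_indicator)
  also have "\<dots> \<le> (\<integral>\<^sup>+\<omega>. ennreal (F \<omega>) \<partial>M)"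
  proof (rule nn_integral_mono)
    fix \<omega> assume "\<omega> \<in> space M"
    show "ennreal (s * \<beta>) * indicator (space M - A) \<omega> \<le> ennreal (F \<omega>)"
    proof (cases "\<omega> \<in> A")
      case False
      then obtain l where "l \<in> L" "s * \<sigma> l < X l \<omega>"
        using \<open>\<omega> \<in> space M\<close> by (auto simp: A_def not_le)
      moreover have "s * \<beta> \<le> s * \<sigma> l"
        using \<beta>(2)[OF \<open>l \<in> L\<close>] \<open>0 \<le> s\<close> by (rule mult_left_mono)
      ultimately show ?thesis
        using F[OF \<open>\<omega> \<in> space M\<close> \<open>l \<in> L\<close>] \<open>\<omega> \<in> space M\<close> False by (auto intro: ennreal_leI)
    qed simp
  qed
  finally show ?thesis by (simp add: s_def)
qed

section \<open>Lower bounds for the expected operator norm\<close>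

lemma obtain_subset_ge_dec_rearr:
  assumes "1 \<le> k" "k \<le> n"
  obtains J where "J \<subseteq> {..<n}" "card J = k" "\<And>j. j \<in> J \<Longrightarrow> dec_rearr x n k \<le> \<bar>x j\<bar>"
proof -
  define xs where "xs = map (\<lambda>i. \<bar>x i\<bar>) [0..<n]"
  define L where "L = rev (sort xs)"
  define v where "v = L ! (k - 1)"
  have v: "dec_rearr x n k = v" by (simp add: dec_rearr_def v_def L_def xs_def)
  have "length L = n" by (simp add: L_def xs_def)
  have "sorted_wrt (\<ge>) L"
    unfolding L_def sorted_wrt_rev using sorted_sort[of xs] by simp
  then have "v \<le> L ! i" if "i < k" for i
    using that assms \<open>length L = n\<close> sorted_wrt_nth_less[of "(\<ge>)" L i "k - 1"]
    by (cases "i = k - 1") (auto simp: v_def)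
  then have "filter ((\<le>) v) (take k L) = take k L"
    by (auto simp: filter_id_conv in_set_conv_nth)
  then have "k = length (filter ((\<le>) v) (take k L))"
    using assms \<open>length L = n\<close> by simp
  also have "\<dots> \<le> length (filter ((\<le>) v) L)"
    using arg_cong[OF filter_append[of "(\<le>) v" "take k L" "drop k L"], of length] by simp
  also have "\<dots> = length (filter ((\<le>) v) xs)"
    by (metis L_def mset_filter mset_rev mset_sort size_mset)
  also have "\<dots> = card {i. i < n \<and> v \<le> \<bar>x i\<bar>}"
    unfolding length_filter_conv_card xs_def by (auto intro!: arg_cong[where f = card])
  finally obtain J where "J \<subseteq> {i. i < n \<and> v \<le> \<bar>x i\<bar>}" "card J = k"
    by (rule obtain_subset_with_card_n)
  then show ?thesis using that v by auto
qed

lemma nn_integral_std_gaussian_PiM_ge_dec_rearr_block_norm: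
  fixes b :: "nat \<Rightarrow> real" and K :: "nat \<Rightarrow> 'i set" and w :: "'i \<Rightarrow> real"
  assumes k: "1 \<le> k" "k \<le> n"
    and K: "\<And>j. j < n \<Longrightarrow> K j \<subseteq> I" "\<And>j. j < n \<Longrightarrow> finite (K j)" "disjoint_family_on K {..<n}"
    and b: "\<And>j. j < n \<Longrightarrow> \<bar>b j\<bar> \<le> sqrt (\<Sum>i\<in>K j. (w i)\<^sup>2)"
    and F: "\<And>\<omega> j. j < n \<Longrightarrow> \<bar>\<Sum>i\<in>K j. w i * \<omega> i\<bar> \<le> F \<omega>"
  shows "ennreal (gaussian_max_const * (sqrt (ln (real k + 1)) * dec_rearr b n k))
           \<le> (\<integral>\<^sup>+\<omega>. ennreal (F \<omega>) \<partial>std_gaussian_PiM I)"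
proof -
  define \<beta> where "\<beta> = dec_rearr b n k"
  show ?thesis
  proof (cases "\<beta> \<le> 0")
    case True
    then have "gaussian_max_const * (sqrt (ln (real k + 1)) * \<beta>) \<le> 0"
      using gaussian_max_const_pos by (intro mult_nonneg_nonpos) auto
    then show ?thesis unfolding \<beta>_def[symmetric] by (simp add: ennreal_neg)
  next
    case False
    obtain J where J: "J \<subseteq> {..<n}" "card J = k" "\<And>j. j \<in> J \<Longrightarrow> \<beta> \<le> \<bar>b j\<bar>"
      using obtain_subset_ge_dec_rearr[OF k] unfolding \<beta>_def by blast
    define \<sigma> where "\<sigma> j = sqrt (\<Sum>i\<in>K j. (w i)\<^sup>2)" for j
    have \<beta>_le_\<sigma>: "\<beta> \<le> \<sigma> j" if "j \<in> J" for j
      using J b[of j] that unfolding \<sigma>_def by force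
    have sum_pos: "0 < (\<Sum>i\<in>K j. (w i)\<^sup>2)" if "j \<in> J" for j
    proof -
      have "0 < sqrt (\<Sum>i\<in>K j. (w i)\<^sup>2)"
        using \<beta>_le_\<sigma>[OF that] False unfolding \<sigma>_def by linarith
      then show ?thesis by simp
    qed
    have "J \<noteq> {}" using J k by auto
    then obtain j where "j \<in> J" by blast
    then have "I \<noteq> {}"
      using sum_pos[of j] K(1)[of j] J by fastforce
    interpret prob_space "std_gaussian_PiM I" by (rule prob_space_std_gaussian_PiM)
    have "ennreal (gaussian_max_const * sqrt (ln (real k + 1)) * \<beta>)
            \<le> (\<integral>\<^sup>+\<omega>. ennreal (F \<omega>) \<partial>std_gaussian_PiM I)"
    proof (rule nn_integral_ge_max_indep_normal[where X="\<lambda>j \<omega>. \<Sum>i\<in>K j. w i * \<omega> i" and \<sigma>=\<sigma>])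
      show "finite J" "card J = k" "1 \<le> k" using J k finite_subset by auto
      show "indep_vars (\<lambda>_. borel) (\<lambda>j \<omega>. \<Sum>i\<in>K j. w i * \<omega> i) J"
        using J K by (intro indep_vars_std_gaussian_PiM_block_sums \<open>I \<noteq> {}\<close>)
          (auto intro: disjoint_family_on_mono)
      show "distributed (std_gaussian_PiM I) lborel (\<lambda>\<omega>. \<Sum>i\<in>K j. w i * \<omega> i) (normal_density 0 (\<sigma> j))"
        if "j \<in> J" for j
        using J K sum_pos[OF that] that unfolding \<sigma>_def
        by (intro distributed_std_gaussian_PiM_linear_comb) auto
      show "0 < \<beta>" using False by simp
      show "\<beta> \<le> \<sigma> j" if "j \<in> J" for j by (rule \<beta>_le_\<sigma>[OF that])
      show "(\<Sum>i\<in>K j. w i * \<omega> i) \<le> F \<omega>" if "j \<in> J" for \<omega> j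
        using F[of j \<omega>] J that by auto
    qed
    then show ?thesis unfolding \<beta>_def[symmetric] by (simp add: mult.assoc)
  qed
qed

lemma nn_integral_std_gaussian_PiM_ge_block_norms:
  fixes b :: "nat \<Rightarrow> real" and K :: "nat \<Rightarrow> 'i set" and w :: "'i \<Rightarrow> real"
  assumes "1 \<le> n"
    and K: "\<And>j. j < n \<Longrightarrow> K j \<subseteq> I" "\<And>j. j < n \<Longrightarrow> finite (K j)" "disjoint_family_on K {..<n}"
    and b: "\<And>j. j < n \<Longrightarrow> \<bar>b j\<bar> \<le> sqrt (\<Sum>i\<in>K j. (w i)\<^sup>2)"
    and F: "\<And>\<omega> j. j < n \<Longrightarrow> \<bar>\<Sum>i\<in>K j. w i * \<omega> i\<bar> \<le> F \<omega>"
  shows "ennreal (gaussian_max_const * Max ((\<lambda>k. sqrt (ln (real k + 1)) * dec_rearr b n k) ` {1..n}))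
           \<le> (\<integral>\<^sup>+\<omega>. ennreal (F \<omega>) \<partial>std_gaussian_PiM I)"
proof -
  have "Max ((\<lambda>k. sqrt (ln (real k + 1)) * dec_rearr b n k) ` {1..n})
          \<in> (\<lambda>k. sqrt (ln (real k + 1)) * dec_rearr b n k) ` {1..n}"
    using \<open>1 \<le> n\<close> by (intro Max_in) auto
  then obtain k where "1 \<le> k" "k \<le> n"
    and "Max ((\<lambda>k. sqrt (ln (real k + 1)) * dec_rearr b n k) ` {1..n})
           = sqrt (ln (real k + 1)) * dec_rearr b n k"
    by auto
  then show ?thesis
    using nn_integral_std_gaussian_PiM_ge_dec_rearr_block_norm[OF _ _ K b F] by simp
qed

lemma nn_integral_op_norm_ge_column_norms:
  fixes A :: "nat \<times> nat \<Rightarrow> real"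
  assumes "1 \<le> p" "1 \<le> q" "q \<le> 2" "1 \<le> m" "1 \<le> n"
  shows "ennreal (gaussian_max_const * Max ((\<lambda>j. sqrt (ln (real j + 1)) *
             dec_rearr (\<lambda>j'. lp_norm (exp_q q) (\<lambda>i. A (i, j')) m) n j) ` {1..n}))
         \<le> (\<integral>\<^sup>+ G. ennreal (op_norm p q m n (\<lambda>ij. A ij * G ij)) \<partial>gauss_matrix m n)"
proof -
  define b where "b = (\<lambda>j. lp_norm (exp_q q) (\<lambda>i. A (i, j)) m)"
  have "\<exists>t. lp_norm (conj_exp q) t m \<le> 1 \<and> (\<Sum>i<m. (A (i, j) * t i)\<^sup>2) = (b j)\<^sup>2" for j
    using lp_norm_exp_p_attained[OF conj_exp_ge_two[OF assms(2,3)] assms(4)]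
    unfolding b_def exp_q_eq_exp_p_conj_exp[OF assms(2,3)] by metis
  then obtain T where T: "\<And>j. lp_norm (conj_exp q) (T j) m \<le> 1"
    "\<And>j. (\<Sum>i<m. (A (i, j) * T j i)\<^sup>2) = (b j)\<^sup>2"
    by metis
  define K where "K j = (\<lambda>i. (i, j)) ` {..<m}" for j :: nat
  define w where "w c = A c * T (snd c) (fst c)" for c
  have sum_K: "(\<Sum>c\<in>K j. f c) = (\<Sum>i<m. f (i, j))" for f :: "nat \<times> nat \<Rightarrow> real" and j
    by (simp add: K_def sum.reindex inj_on_def)
  have "ennreal (gaussian_max_const * Max ((\<lambda>k. sqrt (ln (real k + 1)) * dec_rearr b n k) ` {1..n}))
          \<le> (\<integral>\<^sup>+ G. ennreal (op_norm p q m n (\<lambda>ij. A ij * G ij)) \<partial>std_gaussian_PiM ({..<m} \<times> {..<n}))"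
  proof (rule nn_integral_std_gaussian_PiM_ge_block_norms)
    show "1 \<le> n" "disjoint_family_on K {..<n}" using assms by (auto simp: K_def disjoint_family_on_def)
    show "K j \<subseteq> {..<m} \<times> {..<n}" "finite (K j)" if "j < n" for j using that by (auto simp: K_def)
    show "\<bar>b j\<bar> \<le> sqrt (\<Sum>c\<in>K j. (w c)\<^sup>2)" for j
      using T(2)[of j] by (simp add: sum_K w_def)
    show "\<bar>\<Sum>c\<in>K j. w c * G c\<bar> \<le> op_norm p q m n (\<lambda>ij. A ij * G ij)" if "j < n" for G j
    proof -
      have "\<bar>\<Sum>c\<in>K j. w c * G c\<bar> = \<bar>\<Sum>i<m. (A (i, j) * G (i, j)) * T j i\<bar>"
        by (simp add: sum_K w_def mult_ac)
      also have "\<dots> \<le> lp_norm q (\<lambda>i. A (i, j) * G (i, j)) m * lp_norm (conj_exp q) (T j) m"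
        by (rule abs_sum_mult_le_lp_norm_mult_conj_exp[OF assms(2)])
      also have "\<dots> \<le> lp_norm q (\<lambda>i. A (i, j) * G (i, j)) m"
        using T(1)[of j] lp_norm_nonneg by (intro mult_left_le) auto
      also have "\<dots> \<le> op_norm p q m n (\<lambda>ij. A ij * G ij)"
        using lp_norm_column_le_op_norm[OF assms(1,2) that, of "\<lambda>ij. A ij * G ij"] by simp
      finally show ?thesis .
    qed
  qed
  then show ?thesis by (simp only: b_def gauss_matrix_def)
qed

lemma nn_integral_op_norm_ge_row_norms:
  fixes A :: "nat \<times> nat \<Rightarrow> real"
  assumes "2 \<le> p" "1 \<le> q" "1 \<le> m" "1 \<le> n"
  shows "ennreal (gaussian_max_const * Max ((\<lambda>i. sqrt (ln (real i + 1)) *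
             dec_rearr (\<lambda>i'. lp_norm (exp_p p) (\<lambda>j. A (i', j)) n) m i) ` {1..m}))
         \<le> (\<integral>\<^sup>+ G. ennreal (op_norm p q m n (\<lambda>ij. A ij * G ij)) \<partial>gauss_matrix m n)"
proof -
  have "1 \<le> p" using assms(1) by (rule order_trans[rotated]) simp
  define d where "d = (\<lambda>i. lp_norm (exp_p p) (\<lambda>j. A (i, j)) n)"
  have "\<exists>x. lp_norm p x n \<le> 1 \<and> (\<Sum>j<n. (A (i, j) * x j)\<^sup>2) = (d i)\<^sup>2" for i
    using lp_norm_exp_p_attained[OF assms(1,4)] unfolding d_def by metis
  then obtain X where X: "\<And>i. lp_norm p (X i) n \<le> 1"
    "\<And>i. (\<Sum>j<n. (A (i, j) * X i j)\<^sup>2) = (d i)\<^sup>2"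
    by metis
  define K where "K i = (\<lambda>j. (i, j)) ` {..<n}" for i :: nat
  define w where "w c = A c * X (fst c) (snd c)" for c
  have sum_K: "(\<Sum>c\<in>K i. f c) = (\<Sum>j<n. f (i, j))" for f :: "nat \<times> nat \<Rightarrow> real" and i
    by (simp add: K_def sum.reindex inj_on_def)
  have "ennreal (gaussian_max_const * Max ((\<lambda>k. sqrt (ln (real k + 1)) * dec_rearr d m k) ` {1..m}))
          \<le> (\<integral>\<^sup>+ G. ennreal (op_norm p q m n (\<lambda>ij. A ij * G ij)) \<partial>std_gaussian_PiM ({..<m} \<times> {..<n}))"
  proof (rule nn_integral_std_gaussian_PiM_ge_block_norms)
    show "1 \<le> m" "disjoint_family_on K {..<m}" using assms by (auto simp: K_def disjoint_family_on_def)
    show "K i \<subseteq> {..<m} \<times> {..<n}" "finite (K i)" if "i < m" for i using that by (auto simp: K_def)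
    show "\<bar>d i\<bar> \<le> sqrt (\<Sum>c\<in>K i. (w c)\<^sup>2)" for i
      using X(2)[of i] by (simp add: sum_K w_def)
    show "\<bar>\<Sum>c\<in>K i. w c * G c\<bar> \<le> op_norm p q m n (\<lambda>ij. A ij * G ij)" if "i < m" for G i
    proof -
      have "\<bar>\<Sum>c\<in>K i. w c * G c\<bar> = \<bar>\<Sum>j<n. (A (i, j) * G (i, j)) * X i j\<bar>"
        by (simp add: sum_K w_def mult_ac)
      also have "\<dots> \<le> lp_norm q (\<lambda>i'. \<Sum>j<n. (A (i', j) * G (i', j)) * X i j) m"
        by (rule abs_le_lp_norm[OF assms(2) that])
      also have "\<dots> \<le> op_norm p q m n (\<lambda>ij. A ij * G ij)"
        using lp_norm_mult_le_op_norm[OF \<open>1 \<le> p\<close> assms(2) X(1), where B = "\<lambda>ij. A ij * G ij" and m = m]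
        by simp
      finally show ?thesis .
    qed
  qed
  then show ?thesis by (simp only: d_def gauss_matrix_def)
qed

theorem proposition5p3:
  fixes p q :: ereal
  assumes "1 \<le> p" and "1 \<le> q"
  shows "\<exists>c>0. \<forall>(m::nat) (n::nat) (A :: nat \<times> nat \<Rightarrow> real). 1 \<le> m \<longrightarrow> 1 \<le> n \<longrightarrow>
     (p \<le> q \<and> q \<le> 2 \<longrightarrow>
        (\<integral>\<^sup>+ G. ennreal (op_norm p q m n (\<lambda>ij. A ij * G ij)) \<partial>gauss_matrix m n)
          \<ge> ennreal (c * Max ((\<lambda>j. sqrt (ln (real j + 1)) *
                 dec_rearr (\<lambda>j'. lp_norm (exp_q q) (\<lambda>i. A (i, j')) m) n j) ` {1..n}))) \<and>
     (2 \<le> p \<and> p \<le> q \<longrightarrow>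
        (\<integral>\<^sup>+ G. ennreal (op_norm p q m n (\<lambda>ij. A ij * G ij)) \<partial>gauss_matrix m n)
          \<ge> ennreal (c * Max ((\<lambda>i. sqrt (ln (real i + 1)) *
                 dec_rearr (\<lambda>i'. lp_norm (exp_p p) (\<lambda>j. A (i', j)) n) m i) ` {1..m})))"
  using assms nn_integral_op_norm_ge_column_norms nn_integral_op_norm_ge_row_norms gaussian_max_const_pos
  by blast

end
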